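(* Let $P\in\mathbb{Q}_{\ge0}^{N\times N}$ be the transition matrix of a reversible and ergodic Markov chain on $V$ with stationary distribution $\pi$ and mixing rate $t^*$. For the rotor-router model on a multidigraph for $P$, with any initial configuration, $$\left|\chi^{(T)}_w-\mu^{(T)}_w\right|\le\frac{3\pi_w}{\pi_{\min}}\,t^*\,\bar\Delta$$ for all $w\in V$ and $T\ge0$.
   Context: Let $V=\{1,\dots,N\}$ and let $P\in\mathbb{Q}_{\ge 0}^{N\times N}$ be an ergodic (irreducible, aperiodic) stochastic matrix with stationary distribution $\pi$; $\pi_{\min}=\min_v\pi_v$; reversible means $\pi_uP_{u,v}=\pi_vP_{v,u}$ for all $u,v$. For $v\in V$ let $\mathcal N(v)=\{u: P_{v,u}>0\}$. Total variation distance $d_{TV}(\xi,\zeta)=\frac12\|\xi-\zeta\|_1$; mixing time $\tau(\varepsilon)=\max_{v}\min\{t\ge0: d_{TV}(P^t_{v,\cdot},\pi)\le\varepsilon\}$; mixing rate $t^*=\tau(1/4)$. For each $v$ let $\bar\delta(v)$ be a positive integer with $\bar\delta(v)P_{v,u}\in\mathbb{Z}$ for all $u$, and $\bar\Delta=\max_v\bar\delta(v)$. The rotor router: $\sigma_v(0),\dots,\sigma_v(\bar\delta(v)-1)\in\mathcal N(v)$ is any sequence in which each $u\in\mathcal N(v)$ occurs exactly $\bar\delta(v)P_{v,u}$ times, extended by $\sigma_v(i)=\sigma_v(i\bmod\bar\delta(v))$. Write $I_{v,u}[z,z')=|\{j\in\{z,\dots,z'-1\}:\sigma_v(j)=u\}|$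 (zero if $z'\le z$). Given $\chi^{(0)}\in\mathbb{Z}_{\ge0}^N$, set $Z^{(t)}_{v,u}=I_{v,u}\big[\sum_{s=0}^{t-1}\chi^{(s)}_v,\sum_{s=0}^{t}\chi^{(s)}_v\big)$, $\chi^{(t+1)}_u=\sum_vZ^{(t)}_{v,u}$, $\mu^{(0)}=\chi^{(0)}$, $\mu^{(t)}=\mu^{(0)}P^t$. *)

theory Defs
  imports Complex_Main
begin

text \<open>State space V = {0..<N} (0-based). Matrices are functions nat => nat => real,
  vectors are functions nat => real; only indices < N are relevant.\<close>

fun mpow :: "nat \<Rightarrow> (nat \<Rightarrow> nat \<Rightarrow> real) \<Rightarrow> nat \<Rightarrow> nat \<Rightarrow> nat \<Rightarrow> real" where
  "mpow N P 0 = (\<lambda>u v. if u = v then 1 else 0)"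
| "mpow N P (Suc t) = (\<lambda>u v. \<Sum>w<N. mpow N P t u w * P w v)"

definition stochastic :: "nat \<Rightarrow> (nat \<Rightarrow> nat \<Rightarrow> real) \<Rightarrow> bool" where
  "stochastic N P \<longleftrightarrow> (\<forall>u<N. \<forall>v<N. P u v \<ge> 0) \<and> (\<forall>u<N. (\<Sum>v<N. P u v) = 1)"

definition irreducible_chain :: "nat \<Rightarrow> (nat \<Rightarrow> nat \<Rightarrow> real) \<Rightarrow> bool" where
  "irreducible_chain N P \<longleftrightarrow> (\<forall>u<N. \<forall>v<N. \<exists>t. mpow N P t u v > 0)"

definition period :: "nat \<Rightarrow> (nat \<Rightarrow> nat \<Rightarrow> real) \<Rightarrow> nat \<Rightarrow> nat" where
  "period N P v = Gcd {t. t \<ge> 1 \<and> mpow N P t v v > 0}"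

definition aperiodic_chain :: "nat \<Rightarrow> (nat \<Rightarrow> nat \<Rightarrow> real) \<Rightarrow> bool" where
  "aperiodic_chain N P \<longleftrightarrow> (\<forall>v<N. period N P v = 1)"

definition ergodic :: "nat \<Rightarrow> (nat \<Rightarrow> nat \<Rightarrow> real) \<Rightarrow> bool" where
  "ergodic N P \<longleftrightarrow> irreducible_chain N P \<and> aperiodic_chain N P"

definition stationary :: "nat \<Rightarrow> (nat \<Rightarrow> nat \<Rightarrow> real) \<Rightarrow> (nat \<Rightarrow> real) \<Rightarrow> bool" where
  "stationary N P \<pi> \<longleftrightarrow> (\<forall>v<N. \<pi> v \<ge> 0) \<and> (\<Sum>v<N. \<pi> v) = 1
      \<and> (\<forall>v<N. (\<Sum>u<N. \<pi> u * P u v) = \<pi> v)"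

definition reversible :: "nat \<Rightarrow> (nat \<Rightarrow> nat \<Rightarrow> real) \<Rightarrow> (nat \<Rightarrow> real) \<Rightarrow> bool" where
  "reversible N P \<pi> \<longleftrightarrow> (\<forall>u<N. \<forall>v<N. \<pi> u * P u v = \<pi> v * P v u)"

definition pi_min :: "nat \<Rightarrow> (nat \<Rightarrow> real) \<Rightarrow> real" where
  "pi_min N \<pi> = Min (\<pi> ` {..<N})"

definition dtv :: "nat \<Rightarrow> (nat \<Rightarrow> real) \<Rightarrow> (nat \<Rightarrow> real) \<Rightarrow> real" where
  "dtv N \<xi> \<zeta> = (1/2) * (\<Sum>v<N. \<bar>\<xi> v - \<zeta> v\<bar>)"

definition mixing_time :: "nat \<Rightarrow> (nat \<Rightarrow> nat \<Rightarrow> real) \<Rightarrow> (nat \<Rightarrow> real) \<Rightarrow> real \<Rightarrow> nat" where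
  "mixing_time N P \<pi> \<epsilon> = Max ((\<lambda>v. LEAST t. dtv N (mpow N P t v) \<pi> \<le> \<epsilon>) ` {..<N})"

definition mixing_rate :: "nat \<Rightarrow> (nat \<Rightarrow> nat \<Rightarrow> real) \<Rightarrow> (nat \<Rightarrow> real) \<Rightarrow> nat" where
  "mixing_rate N P \<pi> = mixing_time N P \<pi> (1/4)"

text \<open>Rotor router. \<sigma> v i for i < \<delta> v is the rotor sequence of v;
  it is extended periodically.\<close>

definition sigma_ext :: "(nat \<Rightarrow> nat \<Rightarrow> nat) \<Rightarrow> (nat \<Rightarrow> nat) \<Rightarrow> nat \<Rightarrow> nat \<Rightarrow> nat" where
  "sigma_ext \<sigma> \<delta> v i = \<sigma> v (i mod \<delta> v)"

definition rotor_seq_ok :: "nat \<Rightarrow> (nat \<Rightarrow> nat \<Rightarrow> real) \<Rightarrow> (nat \<Rightarrow> nat) \<Rightarrow> (nat \<Rightarrow> nat \<Rightarrow> nat) \<Rightarrow> bool" where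
  "rotor_seq_ok N P \<delta> \<sigma> \<longleftrightarrow>
     (\<forall>v<N. \<delta> v > 0 \<and> (\<forall>u<N. real (\<delta> v) * P v u \<in> \<int>)
        \<and> (\<forall>i<\<delta> v. \<sigma> v i < N \<and> P v (\<sigma> v i) > 0)
        \<and> (\<forall>u<N. P v u > 0 \<longrightarrow> real (card {i. i < \<delta> v \<and> \<sigma> v i = u}) = real (\<delta> v) * P v u))"

definition Icount :: "(nat \<Rightarrow> nat \<Rightarrow> nat) \<Rightarrow> (nat \<Rightarrow> nat) \<Rightarrow> nat \<Rightarrow> nat \<Rightarrow> nat \<Rightarrow> nat \<Rightarrow> nat" where
  "Icount \<sigma> \<delta> v u z z' = card {j. z \<le> j \<and> j < z' \<and> sigma_ext \<sigma> \<delta> v j = u}"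

text \<open>rr_state t = (chi^(t), S^(t)) where S^(t)_v = sum_{s<t} chi^(s)_v.\<close>
fun rr_state :: "nat \<Rightarrow> (nat \<Rightarrow> nat \<Rightarrow> nat) \<Rightarrow> (nat \<Rightarrow> nat) \<Rightarrow> (nat \<Rightarrow> nat) \<Rightarrow> nat
                  \<Rightarrow> (nat \<Rightarrow> nat) \<times> (nat \<Rightarrow> nat)" where
  "rr_state N \<sigma> \<delta> \<chi>0 0 = (\<chi>0, \<lambda>v. 0)"
| "rr_state N \<sigma> \<delta> \<chi>0 (Suc t) =
     (let (c, S) = rr_state N \<sigma> \<delta> \<chi>0 t in
       (\<lambda>u. \<Sum>v<N. Icount \<sigma> \<delta> v u (S v) (S v + c v), \<lambda>v. S v + c v))"

definition rr_chi :: "nat \<Rightarrow> (nat \<Rightarrow> nat \<Rightarrow> nat) \<Rightarrow> (nat \<Rightarrow> nat) \<Rightarrow> (nat \<Rightarrow> nat) \<Rightarrow> nat \<Rightarrow> nat \<Rightarrow> nat" where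
  "rr_chi N \<sigma> \<delta> \<chi>0 t = fst (rr_state N \<sigma> \<delta> \<chi>0 t)"

definition mu :: "nat \<Rightarrow> (nat \<Rightarrow> nat \<Rightarrow> real) \<Rightarrow> (nat \<Rightarrow> nat) \<Rightarrow> nat \<Rightarrow> nat \<Rightarrow> real" where
  "mu N P \<chi>0 t w = (\<Sum>v<N. real (\<chi>0 v) * mpow N P t v w)"

definition Delta_bar :: "nat \<Rightarrow> (nat \<Rightarrow> nat) \<Rightarrow> nat" where
  "Delta_bar N \<delta> = Max (\<delta> ` {..<N})"

end

theory Submission
  imports Defs
begin

(* A rotor-router step is a Markov step plus an inflow error G(t): the rotor of
   v sends |Z_{v,u} - chi_v P_{v,u}| <= delta(v) P_{v,u} surplus tokens to u, so by
   reversibility (pi_v P_{v,y} = pi_y P_{y,v}) one gets |G(t)_y| <= Delta pi_y / pi_min,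
   and G(t) sums to zero.  Unrolling the recursion (discrete Duhamel formula) and
   using the zero sum gives
     chi(T)_w - mu(T)_w = sum_{t<T} sum_y G(t)_y (P^{T-1-t}_{y,w} - pi_w),
   and reversibility turns the inner sums into total variation distances
   d(s) = d_TV(P^s_{w,.}, pi), so |chi(T)_w - mu(T)_w| <= 2 Delta pi_w / pi_min
   * sum_{s<T} d(s).  Finally d is nonincreasing, d(s + M) <= d(s)/2 and d(M) <= 1/4
   for the mixing rate M, whence sum_{s<T} d(s) <= 3/2 M.  Ergodicity serves only to
   make M well defined (some power of P is positive, so d(s) -> 0) and to give
   pi > 0; rationality of P only guarantees that rotor sequences exist. *)

section \<open>Powers of a stochastic matrix\<close>

lemma mpow_nonneg:
  assumes "stochastic N P" "v < N"
  shows "0 \<le> mpow N P t u v"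
  using assms(2)
proof (induction t arbitrary: u v)
  case 0 then show ?case by simp
next
  case (Suc t) then show ?case using assms(1) unfolding stochastic_def
    by (auto intro!: sum_nonneg mult_nonneg_nonneg)
qed

lemma mpow_row_sum:
  assumes "stochastic N P" "u < N"
  shows "(\<Sum>v<N. mpow N P t u v) = 1"
proof (induction t)
  case 0 then show ?case using assms(2) by simp
next
  case (Suc t)
  have "(\<Sum>v<N. mpow N P (Suc t) u v) = (\<Sum>w<N. mpow N P t u w * (\<Sum>v<N. P w v))"
    by (simp add: sum_distrib_left) (rule sum.swap)
  also have "\<dots> = (\<Sum>w<N. mpow N P t u w)"
    using assms(1) unfolding stochastic_def by simp
  finally show ?case using Suc by simp
qed

lemma mpow_add:
  "v < N \<Longrightarrow> mpow N P (a + b) u v = (\<Sum>w<N. mpow N P a u w * mpow N P b w v)"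
proof (induction b arbitrary: v)
  case 0 then show ?case by (simp add: if_distrib cong: if_cong)
next
  case (Suc b)
  have "mpow N P (a + Suc b) u v = (\<Sum>w<N. (\<Sum>x<N. mpow N P a u x * mpow N P b x w) * P w v)"
    using Suc by simp
  also have "\<dots> = (\<Sum>x<N. mpow N P a u x * (\<Sum>w<N. mpow N P b x w * P w v))"
    by (simp add: sum_distrib_left sum_distrib_right mult.assoc) (rule sum.swap)
  finally show ?case by simp
qed

lemma mpow_Suc_left:
  assumes "u < N" "v < N"
  shows "mpow N P (Suc t) u v = (\<Sum>w<N. P u w * mpow N P t w v)"
proof -
  have one: "mpow N P 1 u w = P u w" for w
  proof -
    have "mpow N P 1 u w = (\<Sum>x<N. if u = x then P x w else 0)"
      by (simp only: One_nat_def mpow.simps) (intro sum.cong; simp)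
    then show ?thesis using assms(1) by simp
  qed
  have "mpow N P (1 + t) u v = (\<Sum>w<N. mpow N P 1 u w * mpow N P t w v)"
    by (rule mpow_add[OF assms(2)])
  also have "\<dots> = (\<Sum>w<N. P u w * mpow N P t w v)"
    by (simp only: one)
  finally show ?thesis by simp
qed

lemma vec_mpow_Suc:
  "(\<Sum>v<N. (\<Sum>y<N. a y * mpow N P n y v) * P v w) = (\<Sum>y<N. a y * mpow N P (Suc n) y w)"
proof -
  have "(\<Sum>v<N. (\<Sum>y<N. a y * mpow N P n y v) * P v w)
      = (\<Sum>y<N. \<Sum>v<N. a y * mpow N P n y v * P v w)"
    by (simp add: sum_distrib_right) (rule sum.swap)
  also have "\<dots> = (\<Sum>y<N. a y * mpow N P (Suc n) y w)"
    by (simp add: sum_distrib_left mult.assoc)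
  finally show ?thesis .
qed

lemma stationary_mpow:
  assumes "stationary N P \<pi>" "v < N"
  shows "(\<Sum>u<N. \<pi> u * mpow N P t u v) = \<pi> v"
  using assms(2)
proof (induction t arbitrary: v)
  case 0 then show ?case by (simp add: if_distrib cong: if_cong)
next
  case (Suc t)
  have "(\<Sum>u<N. \<pi> u * mpow N P (Suc t) u v) = (\<Sum>w<N. (\<Sum>u<N. \<pi> u * mpow N P t u w) * P w v)"
    by (rule vec_mpow_Suc[symmetric])
  also have "\<dots> = (\<Sum>w<N. \<pi> w * P w v)" using Suc by simp
  finally show ?case using assms(1) Suc unfolding stationary_def by simp
qed

lemma reversible_mpow:
  assumes "reversible N P \<pi>" "u < N" "v < N"
  shows "\<pi> u * mpow N P t u v = \<pi> v * mpow N P t v u"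
  using assms(2,3)
proof (induction t arbitrary: u v)
  case 0 then show ?case by simp
next
  case (Suc t)
  have "\<pi> u * mpow N P (Suc t) u v = (\<Sum>w<N. (\<pi> u * mpow N P t u w) * P w v)"
    by (simp add: sum_distrib_left mult.assoc)
  also have "\<dots> = (\<Sum>w<N. mpow N P t w u * (\<pi> w * P w v))"
    using Suc by (intro sum.cong) (auto simp: mult_ac)
  also have "\<dots> = (\<Sum>w<N. mpow N P t w u * (\<pi> v * P v w))"
    using assms(1) Suc unfolding reversible_def by (intro sum.cong) auto
  also have "\<dots> = \<pi> v * (\<Sum>w<N. P v w * mpow N P t w u)"
    by (simp add: sum_distrib_left mult_ac)
  also have "\<dots> = \<pi> v * mpow N P (Suc t) v u"
    by (subst mpow_Suc_left) (use Suc.prems in auto)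
  finally show ?case .
qed

lemma duhamel:
  fixes x g :: "nat \<Rightarrow> nat \<Rightarrow> real"
  assumes step: "\<And>t w. w < N \<Longrightarrow> x (Suc t) w = (\<Sum>v<N. x t v * P v w) + g t w"
    and w: "w < N"
  shows "x T w = (\<Sum>v<N. x 0 v * mpow N P T v w)
                 + (\<Sum>t<T. \<Sum>y<N. g t y * mpow N P (T - Suc t) y w)"
  using w
proof (induction T arbitrary: w)
  case 0
  have "(\<Sum>v<N. x 0 v * mpow N P 0 v w) = (\<Sum>v<N. if v = w then x 0 v else 0)"
    by (intro sum.cong) auto
  then show ?case using 0 by simp
next
  case (Suc T)
  let ?B = "\<lambda>t y v. g t y * mpow N P (T - Suc t) y v"
  have "x (Suc T) w = (\<Sum>v<N. ((\<Sum>u<N. x 0 u * mpow N P T u v) + (\<Sum>t<T. \<Sum>y<N. ?B t y v)) * P v w)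
                     + g T w"
    using Suc by (simp add: step)
  also have "\<dots> = (\<Sum>u<N. x 0 u * mpow N P (Suc T) u w)
                 + (\<Sum>t<T. \<Sum>v<N. (\<Sum>y<N. ?B t y v) * P v w) + g T w"
  proof -
    have "(\<Sum>v<N. (\<Sum>t<T. \<Sum>y<N. ?B t y v) * P v w) = (\<Sum>t<T. \<Sum>v<N. (\<Sum>y<N. ?B t y v) * P v w)"
      by (simp add: sum_distrib_right) (subst sum.swap, simp)
    then show ?thesis by (simp only: distrib_right sum.distrib vec_mpow_Suc)
  qed
  also have "(\<Sum>t<T. \<Sum>v<N. (\<Sum>y<N. ?B t y v) * P v w)
           = (\<Sum>t<T. \<Sum>y<N. g t y * mpow N P (Suc T - Suc t) y w)"
  proof (rule sum.cong[OF refl])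
    fix t assume "t \<in> {..<T}"
    then have "Suc T - Suc t = Suc (T - Suc t)" by simp
    then show "(\<Sum>v<N. (\<Sum>y<N. ?B t y v) * P v w) = (\<Sum>y<N. g t y * mpow N P (Suc T - Suc t) y w)"
      by (simp add: mult.assoc vec_mpow_Suc)
  qed
  finally show ?case using Suc.prems by (simp add: if_distrib cong: if_cong)
qed

section \<open>Counting rotor moves\<close>

lemma Icount_as_sum:
  "Icount \<sigma> \<delta> v u z z' = (\<Sum>j\<in>{z..<z'}. if sigma_ext \<sigma> \<delta> v j = u then 1 else 0)"
proof -
  have "{j. z \<le> j \<and> j < z' \<and> sigma_ext \<sigma> \<delta> v j = u} = {j\<in>{z..<z'}. sigma_ext \<sigma> \<delta> v j = u}"
    by auto
  then show ?thesis unfolding Icount_def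
    by (simp add: sum.inter_filter[symmetric])
qed

lemma Icount_split:
  "z \<le> z' \<Longrightarrow> z' \<le> z'' \<Longrightarrow> Icount \<sigma> \<delta> v u z z'' = Icount \<sigma> \<delta> v u z z' + Icount \<sigma> \<delta> v u z' z''"
  unfolding Icount_as_sum by (simp add: sum.atLeastLessThan_concat)

lemma Icount_period:
  assumes "0 < \<delta> v"
  shows "Icount \<sigma> \<delta> v u z (z + \<delta> v) = card {i. i < \<delta> v \<and> \<sigma> v i = u}"
proof (induction z)
  case 0
  have "{j. 0 \<le> j \<and> j < \<delta> v \<and> \<sigma> v (j mod \<delta> v) = u} = {i. i < \<delta> v \<and> \<sigma> v i = u}"
    by auto
  then show ?case by (simp add: Icount_def sigma_ext_def)
next
  case (Suc z)
  define f where "f j = (if sigma_ext \<sigma> \<delta> v j = u then 1 else 0::nat)" for j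
  have per: "f (z + \<delta> v) = f z" by (simp add: f_def sigma_ext_def)
  have a: "sum f {z..<Suc (z + \<delta> v)} = sum f {z..<z + \<delta> v} + f (z + \<delta> v)"
    by (rule sum.atLeastLessThan_Suc) simp
  have b: "sum f {z..<Suc (z + \<delta> v)} = f z + sum f {Suc z..<Suc (z + \<delta> v)}"
    by (rule sum.atLeast_Suc_lessThan) (use assms in simp)
  have "sum f {Suc z..<Suc z + \<delta> v} = sum f {z..<z + \<delta> v}" using a b per by simp
  then show ?case using Suc unfolding Icount_as_sum f_def by simp
qed

lemma Icount_discrepancy:
  fixes \<sigma> :: "nat \<Rightarrow> nat \<Rightarrow> nat" and u :: nat
  assumes dpos: "0 < \<delta> v"
  defines "c \<equiv> card {i. i < \<delta> v \<and> \<sigma> v i = u}"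
  shows "\<bar>real (Icount \<sigma> \<delta> v u z (z + k)) - real k * real c / real (\<delta> v)\<bar> \<le> real c"
proof (induction k arbitrary: z rule: less_induct)
  case (less k)
  let ?m = "\<lambda>k. real k * real c / real (\<delta> v)"
  show ?case
  proof (cases "\<delta> v \<le> k")
    case True
    have split: "Icount \<sigma> \<delta> v u z (z + k) = c + Icount \<sigma> \<delta> v u (z + \<delta> v) (z + \<delta> v + (k - \<delta> v))"
      using True Icount_split[of z "z + \<delta> v" "z + k"] Icount_period[of \<delta> v \<sigma> u z, OF dpos] unfolding c_def by simp
    have mean: "?m k = real c + ?m (k - \<delta> v)"
      using True dpos by (simp add: of_nat_diff field_simps)
    have "\<bar>real (Icount \<sigma> \<delta> v u (z + \<delta> v) (z + \<delta> v + (k - \<delta> v))) - ?m (k - \<delta> v)\<bar> \<le> real c"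
      using less.IH[of "k - \<delta> v" "z + \<delta> v"] dpos True by simp
    then show ?thesis using split mean by simp
  next
    case False
    have "real (Icount \<sigma> \<delta> v u z (z + k)) \<le> real c"
      using Icount_split[of z "z + k" "z + \<delta> v" \<sigma> \<delta> v u] Icount_period[of \<delta> v \<sigma> u z, OF dpos] False
      unfolding c_def by simp
    moreover have "?m k \<le> real c"
      using False dpos by (simp add: field_simps mult_left_mono)
    moreover have "0 \<le> ?m k" by simp
    ultimately show ?thesis
      unfolding abs_le_iff using of_nat_0_le_iff[of "Icount \<sigma> \<delta> v u z (z + k)"] by linarith
  qed
qed

lemma rotor_period_count:
  assumes R: "rotor_seq_ok N P \<delta> \<sigma>" and S: "stochastic N P" and v: "v < N" and u: "u < N"
  shows "real (card {i. i < \<delta> v \<and> \<sigma> v i = u}) = real (\<delta> v) * P v u"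
proof (cases "P v u > 0")
  case True
  then show ?thesis using R v u unfolding rotor_seq_ok_def by auto
next
  case False
  then have "P v u = 0" using S v u unfolding stochastic_def by force
  moreover have "{i. i < \<delta> v \<and> \<sigma> v i = u} = {}"
    using R v False unfolding rotor_seq_ok_def by auto
  ultimately show ?thesis by simp
qed

lemma rotor_flow_discrepancy:
  assumes R: "rotor_seq_ok N P \<delta> \<sigma>" and S: "stochastic N P" and v: "v < N" and u: "u < N"
  shows "\<bar>real (Icount \<sigma> \<delta> v u z (z + k)) - real k * P v u\<bar> \<le> real (\<delta> v) * P v u"
proof -
  have dpos: "0 < \<delta> v" using R v unfolding rotor_seq_ok_def by auto
  have "real k * P v u = real k * real (card {i. i < \<delta> v \<and> \<sigma> v i = u}) / real (\<delta> v)"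
    using rotor_period_count[OF R S v u] dpos by simp
  then show ?thesis
    using Icount_discrepancy[of \<delta> v \<sigma> u z k, OF dpos] rotor_period_count[OF R S v u] by simp
qed

lemma Icount_row_sum:
  assumes R: "rotor_seq_ok N P \<delta> \<sigma>" and v: "v < N"
  shows "(\<Sum>u<N. Icount \<sigma> \<delta> v u z z') = z' - z"
proof -
  have lt: "sigma_ext \<sigma> \<delta> v j < N" for j
    using R v unfolding rotor_seq_ok_def sigma_ext_def by auto
  have "(\<Sum>u<N. Icount \<sigma> \<delta> v u z z')
      = (\<Sum>j\<in>{z..<z'}. \<Sum>u<N. if sigma_ext \<sigma> \<delta> v j = u then 1 else 0)"
    unfolding Icount_as_sum by (rule sum.swap)
  also have "\<dots> = (\<Sum>j\<in>{z..<z'}. 1)"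
    using lt by (intro sum.cong) auto
  finally show ?thesis by simp
qed

section \<open>The rotor router as a perturbed Markov chain\<close>

text \<open>Number of tokens sent out of each vertex before step \<open>t\<close>.\<close>
definition rr_sent :: "nat \<Rightarrow> (nat \<Rightarrow> nat \<Rightarrow> nat) \<Rightarrow> (nat \<Rightarrow> nat) \<Rightarrow> (nat \<Rightarrow> nat) \<Rightarrow> nat \<Rightarrow> nat \<Rightarrow> nat"
  where "rr_sent N \<sigma> \<delta> \<chi>0 t = snd (rr_state N \<sigma> \<delta> \<chi>0 t)"

lemma rr_chi_Suc:
  "rr_chi N \<sigma> \<delta> \<chi>0 (Suc t) u =
     (\<Sum>v<N. Icount \<sigma> \<delta> v u (rr_sent N \<sigma> \<delta> \<chi>0 t v) (rr_sent N \<sigma> \<delta> \<chi>0 t v + rr_chi N \<sigma> \<delta> \<chi>0 t v))"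
  by (simp add: rr_chi_def rr_sent_def case_prod_unfold Let_def)

definition rotor_error :: "nat \<Rightarrow> (nat \<Rightarrow> nat \<Rightarrow> real) \<Rightarrow> (nat \<Rightarrow> nat \<Rightarrow> nat) \<Rightarrow> (nat \<Rightarrow> nat)
    \<Rightarrow> (nat \<Rightarrow> nat) \<Rightarrow> nat \<Rightarrow> nat \<Rightarrow> nat \<Rightarrow> real" where
  "rotor_error N P \<sigma> \<delta> \<chi>0 t v u =
     real (Icount \<sigma> \<delta> v u (rr_sent N \<sigma> \<delta> \<chi>0 t v) (rr_sent N \<sigma> \<delta> \<chi>0 t v + rr_chi N \<sigma> \<delta> \<chi>0 t v))
     - real (rr_chi N \<sigma> \<delta> \<chi>0 t v) * P v u"

definition inflow_error :: "nat \<Rightarrow> (nat \<Rightarrow> nat \<Rightarrow> real) \<Rightarrow> (nat \<Rightarrow> nat \<Rightarrow> nat) \<Rightarrow> (nat \<Rightarrow> nat)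
    \<Rightarrow> (nat \<Rightarrow> nat) \<Rightarrow> nat \<Rightarrow> nat \<Rightarrow> real" where
  "inflow_error N P \<sigma> \<delta> \<chi>0 t u = (\<Sum>v<N. rotor_error N P \<sigma> \<delta> \<chi>0 t v u)"

lemma rr_chi_step:
  "real (rr_chi N \<sigma> \<delta> \<chi>0 (Suc t) u)
     = (\<Sum>v<N. real (rr_chi N \<sigma> \<delta> \<chi>0 t v) * P v u) + inflow_error N P \<sigma> \<delta> \<chi>0 t u"
  by (simp add: rr_chi_Suc inflow_error_def rotor_error_def sum.distrib[symmetric])

lemma rotor_error_row_sum:
  assumes R: "rotor_seq_ok N P \<delta> \<sigma>" and S: "stochastic N P" and v: "v < N"
  shows "(\<Sum>u<N. rotor_error N P \<sigma> \<delta> \<chi>0 t v u) = 0"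
proof -
  let ?S = "rr_sent N \<sigma> \<delta> \<chi>0 t v" and ?c = "rr_chi N \<sigma> \<delta> \<chi>0 t v"
  have "(\<Sum>u<N. rotor_error N P \<sigma> \<delta> \<chi>0 t v u)
      = real (\<Sum>u<N. Icount \<sigma> \<delta> v u ?S (?S + ?c)) - real ?c * (\<Sum>u<N. P v u)"
    unfolding rotor_error_def by (simp add: sum_subtractf sum_distrib_left)
  then show ?thesis using Icount_row_sum[OF R v] S v unfolding stochastic_def by simp
qed

lemma inflow_error_sum:
  assumes R: "rotor_seq_ok N P \<delta> \<sigma>" and S: "stochastic N P"
  shows "(\<Sum>u<N. inflow_error N P \<sigma> \<delta> \<chi>0 t u) = 0"
proof -
  have "(\<Sum>u<N. inflow_error N P \<sigma> \<delta> \<chi>0 t u) = (\<Sum>v<N. \<Sum>u<N. rotor_error N P \<sigma> \<delta> \<chi>0 t v u)"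
    unfolding inflow_error_def by (rule sum.swap)
  then show ?thesis using rotor_error_row_sum[OF R S] by simp
qed

text \<open>By reversibility \<open>P(v,y) \<le> \<pi>(y) P(y,v) / m\<close> for any lower bound \<open>m\<close> of \<open>\<pi>\<close>, so the
  inflow error at \<open>y\<close> is at most \<open>\<Delta> \<pi>(y) / m\<close>.\<close>
lemma inflow_error_bound:
  assumes R: "rotor_seq_ok N P \<delta> \<sigma>" and S: "stochastic N P" and Rv: "reversible N P \<pi>"
    and m: "0 < m" and m_le: "\<forall>v<N. m \<le> \<pi> v" and y: "y < N"
  shows "\<bar>inflow_error N P \<sigma> \<delta> \<chi>0 t y\<bar> \<le> real (Delta_bar N \<delta>) * \<pi> y / m"
proof -
  let ?D = "real (Delta_bar N \<delta>)"
  have "\<bar>inflow_error N P \<sigma> \<delta> \<chi>0 t y\<bar> \<le> (\<Sum>v<N. \<bar>rotor_error N P \<sigma> \<delta> \<chi>0 t v y\<bar>)"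
    unfolding inflow_error_def by (rule sum_abs)
  also have "\<dots> \<le> (\<Sum>v<N. ?D * (\<pi> y * P y v / m))"
  proof (intro sum_mono)
    fix v assume v: "v \<in> {..<N}"
    have Pnn: "0 \<le> P v y" using S v y unfolding stochastic_def by auto
    have "\<delta> v \<le> Delta_bar N \<delta>" unfolding Delta_bar_def using v by (intro Max_ge) auto
    then have "real (\<delta> v) * P v y \<le> ?D * P v y" using Pnn by (intro mult_right_mono) auto
    moreover have "m * P v y \<le> \<pi> y * P y v"
      using mult_right_mono[OF m_le[rule_format, of v] Pnn] Rv v y unfolding reversible_def by auto
    then have "?D * P v y \<le> ?D * (\<pi> y * P y v / m)"
      using m by (intro mult_left_mono) (simp_all add: field_simps)
    moreover have "\<bar>rotor_error N P \<sigma> \<delta> \<chi>0 t v y\<bar> \<le> real (\<delta> v) * P v y"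
      unfolding rotor_error_def using rotor_flow_discrepancy[OF R S _ y] v by simp
    ultimately show "\<bar>rotor_error N P \<sigma> \<delta> \<chi>0 t v y\<bar> \<le> ?D * (\<pi> y * P y v / m)"
      by linarith
  qed
  also have "\<dots> = ?D * \<pi> y / m * (\<Sum>v<N. P y v)"
    by (subst sum_distrib_left) (intro sum.cong refl, simp)
  also have "\<dots> = ?D * \<pi> y / m" using S y unfolding stochastic_def by simp
  finally show ?thesis .
qed

text \<open>Since each error vector sums to zero,
  any constant (here \<open>\<pi>(w)\<close>) may be subtracted from the propagator.\<close>
lemma rr_deviation_expansion:
  assumes R: "rotor_seq_ok N P \<delta> \<sigma>" and S: "stochastic N P" and w: "w < N"
  shows "real (rr_chi N \<sigma> \<delta> \<chi>0 T w) - mu N P \<chi>0 T w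
     = (\<Sum>t<T. \<Sum>y<N. inflow_error N P \<sigma> \<delta> \<chi>0 t y * (mpow N P (T - Suc t) y w - \<pi> w))"
proof -
  let ?G = "inflow_error N P \<sigma> \<delta> \<chi>0"
  have "real (rr_chi N \<sigma> \<delta> \<chi>0 T w) - mu N P \<chi>0 T w
      = (\<Sum>t<T. \<Sum>y<N. ?G t y * mpow N P (T - Suc t) y w)"
    using duhamel[where x = "\<lambda>t u. real (rr_chi N \<sigma> \<delta> \<chi>0 t u)" and g = ?G and P = P,
                  OF rr_chi_step w]
    by (simp add: mu_def rr_chi_def)
  also have "\<dots> = (\<Sum>t<T. \<Sum>y<N. ?G t y * (mpow N P (T - Suc t) y w - \<pi> w))"
    using inflow_error_sum[OF R S]
    by (simp add: right_diff_distrib sum_subtractf sum_distrib_right[symmetric])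
  finally show ?thesis .
qed

text \<open>Reversibility converts a column deviation of \<open>P\<^sup>n\<close> into a row deviation, i.e. into a
  total variation distance.\<close>
lemma reversible_column_deviation:
  assumes St: "stationary N P \<pi>" and Rv: "reversible N P \<pi>" and w: "w < N"
  shows "(\<Sum>y<N. \<pi> y * \<bar>mpow N P n y w - \<pi> w\<bar>) = 2 * \<pi> w * dtv N (mpow N P n w) \<pi>"
proof -
  have nn: "0 \<le> \<pi> v" if "v < N" for v using St that unfolding stationary_def by auto
  have "(\<Sum>y<N. \<pi> y * \<bar>mpow N P n y w - \<pi> w\<bar>) = (\<Sum>y<N. \<pi> w * \<bar>mpow N P n w y - \<pi> y\<bar>)"
  proof (rule sum.cong[OF refl])
    fix y assume y: "y \<in> {..<N}"
    have "\<pi> y * (mpow N P n y w - \<pi> w) = \<pi> w * (mpow N P n w y - \<pi> y)"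
      using reversible_mpow[OF Rv, of y w n] y w by (simp add: algebra_simps)
    then show "\<pi> y * \<bar>mpow N P n y w - \<pi> w\<bar> = \<pi> w * \<bar>mpow N P n w y - \<pi> y\<bar>"
      using nn y w by (metis abs_mult abs_of_nonneg lessThan_iff)
  qed
  then show ?thesis unfolding dtv_def by (simp add: sum_distrib_left)
qed

lemma rr_deviation_bound:
  assumes R: "rotor_seq_ok N P \<delta> \<sigma>" and S: "stochastic N P" and St: "stationary N P \<pi>"
    and Rv: "reversible N P \<pi>" and m: "0 < m" and m_le: "\<forall>v<N. m \<le> \<pi> v" and w: "w < N"
  shows "\<bar>real (rr_chi N \<sigma> \<delta> \<chi>0 T w) - mu N P \<chi>0 T w\<bar>
     \<le> 2 * real (Delta_bar N \<delta>) * \<pi> w / m * (\<Sum>s<T. dtv N (mpow N P s w) \<pi>)"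
proof -
  let ?D = "real (Delta_bar N \<delta>)" and ?G = "inflow_error N P \<sigma> \<delta> \<chi>0"
  let ?x = "\<lambda>t y. mpow N P (T - Suc t) y w - \<pi> w"
  have "\<bar>\<Sum>t<T. \<Sum>y<N. ?G t y * ?x t y\<bar> \<le> (\<Sum>t<T. \<Sum>y<N. \<bar>?G t y\<bar> * \<bar>?x t y\<bar>)"
    unfolding abs_mult[symmetric] by (rule order_trans[OF sum_abs]) (intro sum_mono sum_abs)
  also have "\<dots> \<le> (\<Sum>t<T. \<Sum>y<N. ?D / m * (\<pi> y * \<bar>?x t y\<bar>))"
  proof (intro sum_mono)
    fix t y assume y: "y \<in> {..<N}"
    have "\<bar>?G t y\<bar> * \<bar>?x t y\<bar> \<le> ?D * \<pi> y / m * \<bar>?x t y\<bar>"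
      using inflow_error_bound[OF R S Rv m m_le] y by (intro mult_right_mono) auto
    then show "\<bar>?G t y\<bar> * \<bar>?x t y\<bar> \<le> ?D / m * (\<pi> y * \<bar>?x t y\<bar>)" by simp
  qed
  also have "\<dots> = (\<Sum>t<T. ?D / m * (2 * \<pi> w * dtv N (mpow N P (T - Suc t) w) \<pi>))"
    by (simp only: sum_distrib_left[symmetric] reversible_column_deviation[OF St Rv w])
  also have "\<dots> = (\<Sum>s<T. ?D / m * (2 * \<pi> w * dtv N (mpow N P s w) \<pi>))"
    by (rule sum.nat_diff_reindex)
  also have "\<dots> = 2 * ?D * \<pi> w / m * (\<Sum>s<T. dtv N (mpow N P s w) \<pi>)"
    by (simp add: sum_distrib_left sum_divide_distrib mult_ac)
  finally show ?thesis using rr_deviation_expansion[OF R S w] by simp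
qed

section \<open>Decay of the total variation distance\<close>

lemma dtv_nonneg: "0 \<le> dtv N x y"
  unfolding dtv_def by (simp add: sum_nonneg)

lemma dtv_mpow_le1:
  assumes S: "stochastic N P" and St: "stationary N P \<pi>" and w: "w < N"
  shows "dtv N (mpow N P s w) \<pi> \<le> 1"
proof -
  have "(\<Sum>v<N. \<bar>mpow N P s w v - \<pi> v\<bar>) \<le> (\<Sum>v<N. mpow N P s w v + \<pi> v)"
  proof (rule sum_mono)
    fix v assume "v \<in> {..<N}"
    then have "0 \<le> mpow N P s w v" "0 \<le> \<pi> v" using mpow_nonneg[OF S] St unfolding stationary_def by auto
    then show "\<bar>mpow N P s w v - \<pi> v\<bar> \<le> mpow N P s w v + \<pi> v" by simp
  qed
  also have "\<dots> = 2" using mpow_row_sum[OF S w] St unfolding stationary_def by (simp add: sum.distrib)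
  finally show ?thesis unfolding dtv_def by simp
qed

text \<open>A stochastic matrix whose entries are all at least \<open>\<theta>\<close> contracts the l1 norm of a
  zero-sum vector by the factor \<open>1 - N \<theta>\<close> (Doeblin); for \<open>\<theta> = 0\<close> this is plain
  non-expansiveness.\<close>
lemma l1_contraction:
  fixes x :: "nat \<Rightarrow> real" and M :: "nat \<Rightarrow> nat \<Rightarrow> real"
  assumes rs: "\<forall>u<N. (\<Sum>v<N. M u v) = 1" and lb: "\<forall>u<N. \<forall>v<N. \<theta> \<le> M u v"
    and z: "\<theta> = 0 \<or> (\<Sum>u<N. x u) = 0"
  shows "(\<Sum>v<N. \<bar>\<Sum>u<N. x u * M u v\<bar>) \<le> (1 - real N * \<theta>) * (\<Sum>u<N. \<bar>x u\<bar>)"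
proof -
  have "(\<Sum>v<N. \<bar>\<Sum>u<N. x u * M u v\<bar>) \<le> (\<Sum>v<N. \<Sum>u<N. \<bar>x u\<bar> * (M u v - \<theta>))"
  proof (rule sum_mono)
    fix v assume v: "v \<in> {..<N}"
    have "(\<Sum>u<N. x u * M u v) = (\<Sum>u<N. x u * (M u v - \<theta>)) + \<theta> * (\<Sum>u<N. x u)"
      by (simp add: right_diff_distrib sum_subtractf sum_distrib_left mult.commute)
    also have "\<dots> = (\<Sum>u<N. x u * (M u v - \<theta>))" using z by auto
    finally have "\<bar>\<Sum>u<N. x u * M u v\<bar> \<le> (\<Sum>u<N. \<bar>x u * (M u v - \<theta>)\<bar>)"
      by (simp add: sum_abs)
    also have "\<dots> = (\<Sum>u<N. \<bar>x u\<bar> * (M u v - \<theta>))"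
      using lb v by (intro sum.cong refl) (simp add: abs_mult)
    finally show "\<bar>\<Sum>u<N. x u * M u v\<bar> \<le> (\<Sum>u<N. \<bar>x u\<bar> * (M u v - \<theta>))" .
  qed
  also have "\<dots> = (\<Sum>u<N. \<bar>x u\<bar> * (\<Sum>v<N. M u v - \<theta>))"
    by (subst sum.swap) (simp add: sum_distrib_left)
  also have "\<dots> = (\<Sum>u<N. \<bar>x u\<bar> * (1 - real N * \<theta>))"
    using rs by (intro sum.cong refl) (simp add: sum_subtractf)
  also have "\<dots> = (\<Sum>u<N. \<bar>x u\<bar>) * (1 - real N * \<theta>)"
    by (rule sum_distrib_right[symmetric])
  finally show ?thesis by (simp only: mult.commute)
qed

text \<open>Since \<open>\<pi> P\<^sup>t = \<pi>\<close>, the deviation from \<open>\<pi>\<close> evolves linearly.\<close>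
lemma mpow_deviation_shift:
  assumes "stationary N P \<pi>" "v < N"
  shows "mpow N P (s + t) w v - \<pi> v = (\<Sum>u<N. (mpow N P s w u - \<pi> u) * mpow N P t u v)"
  using mpow_add[OF assms(2), of P s t w] stationary_mpow[OF assms, of t]
  by (simp add: left_diff_distrib sum_subtractf)

text \<open>The distance of \<open>P\<^sup>s(w,\<cdot>)\<close> to \<open>\<pi>\<close> is nonincreasing in \<open>s\<close>, since \<open>P\<close> does not
  expand the l1 norm.\<close>
lemma dtv_mpow_antimono:
  assumes S: "stochastic N P" and St: "stationary N P \<pi>" and "s \<le> s'"
  shows "dtv N (mpow N P s' w) \<pi> \<le> dtv N (mpow N P s w) \<pi>"
proof -
  have "dtv N (mpow N P (Suc s) w) \<pi> \<le> dtv N (mpow N P s w) \<pi>" for s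
  proof -
    have "(\<Sum>v<N. \<bar>mpow N P (Suc s) w v - \<pi> v\<bar>) = (\<Sum>v<N. \<bar>\<Sum>u<N. (mpow N P s w u - \<pi> u) * P u v\<bar>)"
    proof (rule sum.cong[OF refl])
      fix v assume "v \<in> {..<N}"
      then have "\<pi> v = (\<Sum>u<N. \<pi> u * P u v)" using St unfolding stationary_def by auto
      then show "\<bar>mpow N P (Suc s) w v - \<pi> v\<bar> = \<bar>\<Sum>u<N. (mpow N P s w u - \<pi> u) * P u v\<bar>"
        by (simp add: left_diff_distrib sum_subtractf)
    qed
    also have "\<dots> \<le> (1 - real N * 0) * (\<Sum>u<N. \<bar>mpow N P s w u - \<pi> u\<bar>)"
      using S unfolding stochastic_def by (intro l1_contraction) auto
    finally show ?thesis unfolding dtv_def by simp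
  qed
  then show ?thesis
    using lift_Suc_antimono_le[of "\<lambda>s. dtv N (mpow N P s w) \<pi>"] assms(3) by simp
qed

lemma coupling_identity:
  fixes p q r :: "nat \<Rightarrow> real"
  assumes "(\<Sum>a<N. p a) = m" "(\<Sum>a<N. q a) = m"
  shows "m * (\<Sum>a<N. (p a - q a) * r a) = (\<Sum>a<N. \<Sum>b<N. p a * q b * (r a - r b))"
proof -
  have "(\<Sum>a<N. \<Sum>b<N. p a * q b * (r a - r b))
     = (\<Sum>a<N. p a * r a) * (\<Sum>b<N. q b) - (\<Sum>b<N. q b * r b) * (\<Sum>a<N. p a)"
    by (simp add: right_diff_distrib sum_subtractf sum_distrib_left sum_distrib_right mult_ac)
       (rule sum.swap)
  then show ?thesis
    using assms by (simp add: left_diff_distrib sum_subtractf algebra_simps)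
qed

lemma pairwise_contraction:
  fixes x :: "nat \<Rightarrow> real" and r :: "nat \<Rightarrow> nat \<Rightarrow> real"
  assumes x0: "(\<Sum>a<N. x a) = 0" and D: "\<forall>a<N. \<forall>b<N. (\<Sum>v<N. \<bar>r a v - r b v\<bar>) \<le> D"
  shows "2 * (\<Sum>v<N. \<bar>\<Sum>a<N. x a * r a v\<bar>) \<le> D * (\<Sum>a<N. \<bar>x a\<bar>)"
proof -
  define p where "p a = max (x a) 0" for a
  define q where "q a = max (- x a) 0" for a
  define m where "m = (\<Sum>a<N. p a)"
  have xpq: "x a = p a - q a" and apq: "\<bar>x a\<bar> = p a + q a" for a
    unfolding p_def q_def by auto
  have pn: "0 \<le> p a" and qn: "0 \<le> q a" for a unfolding p_def q_def by auto
  have qm: "(\<Sum>a<N. q a) = m" using x0 unfolding m_def xpq by (simp add: sum_subtractf)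
  have ax: "(\<Sum>a<N. \<bar>x a\<bar>) = 2 * m" unfolding apq m_def using qm m_def by (simp add: sum.distrib)
  have m0: "0 \<le> m" unfolding m_def using pn by (simp add: sum_nonneg)
  let ?L = "(\<Sum>v<N. \<bar>\<Sum>a<N. x a * r a v\<bar>)"
  have key: "m * (\<Sum>a<N. x a * r a v) = (\<Sum>a<N. \<Sum>b<N. p a * q b * (r a v - r b v))" for v
    using coupling_identity[OF m_def[symmetric] qm, of "\<lambda>a. r a v"] unfolding xpq .
  have "m * ?L = (\<Sum>v<N. m * \<bar>\<Sum>a<N. x a * r a v\<bar>)"
    by (rule sum_distrib_left)
  also have "\<dots> = (\<Sum>v<N. \<bar>m * (\<Sum>a<N. x a * r a v)\<bar>)"
    using m0 by (simp add: abs_mult)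
  also have "\<dots> = (\<Sum>v<N. \<bar>\<Sum>a<N. \<Sum>b<N. p a * q b * (r a v - r b v)\<bar>)"
    by (simp only: key)
  also have "\<dots> \<le> (\<Sum>v<N. \<Sum>a<N. \<Sum>b<N. p a * q b * \<bar>r a v - r b v\<bar>)"
    using pn qn
    by (intro sum_mono order_trans[OF sum_abs]) (simp add: abs_mult order_trans[OF sum_abs])
  also have "\<dots> = (\<Sum>a<N. \<Sum>b<N. p a * q b * (\<Sum>v<N. \<bar>r a v - r b v\<bar>))"
    by (simp add: sum_distrib_left) (subst sum.swap, rule sum.cong[OF refl], rule sum.swap)
  also have "\<dots> \<le> (\<Sum>a<N. \<Sum>b<N. p a * q b * D)"
    using D pn qn by (intro sum_mono mult_left_mono) auto
  also have "\<dots> = (\<Sum>a<N. \<Sum>b<N. p a * q b) * D"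
    by (simp add: sum_distrib_right)
  also have "\<dots> = (\<Sum>a<N. p a) * (\<Sum>b<N. q b) * D"
    by (simp add: sum_product)
  also have "\<dots> = m * (m * D)"
    using qm unfolding m_def by simp
  finally have mL: "m * ?L \<le> m * (m * D)" .
  show ?thesis
  proof (cases "m = 0")
    case True
    then have "\<forall>a<N. x a = 0"
      using qm pn qn unfolding m_def xpq by (simp add: sum_nonneg_eq_0_iff)
    then show ?thesis by simp
  next
    case False
    then have "?L \<le> m * D" using mL m0 by simp
    then show ?thesis using ax by (simp add: algebra_simps)
  qed
qed

lemma dtv_halving:
  assumes S: "stochastic N P" and St: "stationary N P \<pi>" and w: "w < N"
    and h: "\<forall>a<N. dtv N (mpow N P t a) \<pi> \<le> 1/4"
  shows "dtv N (mpow N P (s + t) w) \<pi> \<le> dtv N (mpow N P s w) \<pi> / 2"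
proof -
  define x where "x u = mpow N P s w u - \<pi> u" for u
  have x0: "(\<Sum>u<N. x u) = 0"
    using mpow_row_sum[OF S w, of s] St unfolding x_def stationary_def by (simp add: sum_subtractf)
  have D: "\<forall>a<N. \<forall>b<N. (\<Sum>v<N. \<bar>mpow N P t a v - mpow N P t b v\<bar>) \<le> 1"
  proof (intro allI impI)
    fix a b assume ab: "a < N" "b < N"
    have "(\<Sum>v<N. \<bar>mpow N P t a v - mpow N P t b v\<bar>)
        \<le> (\<Sum>v<N. \<bar>mpow N P t a v - \<pi> v\<bar> + \<bar>mpow N P t b v - \<pi> v\<bar>)"
      by (intro sum_mono) linarith
    also have "\<dots> = 2 * dtv N (mpow N P t a) \<pi> + 2 * dtv N (mpow N P t b) \<pi>"
      unfolding dtv_def by (simp add: sum.distrib)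
    finally show "(\<Sum>v<N. \<bar>mpow N P t a v - mpow N P t b v\<bar>) \<le> 1"
      using h[rule_format, OF ab(1)] h[rule_format, OF ab(2)] by linarith
  qed
  have "(\<Sum>v<N. \<bar>mpow N P (s + t) w v - \<pi> v\<bar>) = (\<Sum>v<N. \<bar>\<Sum>u<N. x u * mpow N P t u v\<bar>)"
    unfolding x_def using mpow_deviation_shift[OF St] by (intro sum.cong refl) auto
  with pairwise_contraction[OF x0 D] show ?thesis unfolding dtv_def x_def by simp
qed

lemma halving_geometric:
  fixes d :: "nat \<Rightarrow> real"
  assumes half: "\<And>s. d (s + \<tau>) \<le> d s / 2" and q: "d \<tau> \<le> 1/4"
  shows "d (Suc k * \<tau>) \<le> (1/2)^(k+2)"
proof (induction k)
  case 0 then show ?case using q by simp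
next
  case (Suc k)
  have "d (Suc (Suc k) * \<tau>) = d (Suc k * \<tau> + \<tau>)" by (simp add: algebra_simps)
  also have "\<dots> \<le> d (Suc k * \<tau>) / 2" by (rule half)
  also have "\<dots> \<le> (1/2)^(k+2) / 2" using Suc by simp
  finally show ?case by simp
qed

text \<open>Summing block by block: the first block contributes at most \<open>\<tau>\<close>, the \<open>(k+2)\<close>-nd at most
  \<open>\<tau> (1/2)^(k+2)\<close>, giving the partial geometric series \<open>\<tau> (3/2 - (1/2)^(k+1))\<close>.\<close>
lemma halving_block_sum:
  fixes d :: "nat \<Rightarrow> real"
  assumes le1: "\<And>s. d s \<le> 1" and mono: "\<And>s s'. s \<le> s' \<Longrightarrow> d s' \<le> d s"
    and half: "\<And>s. d (s + \<tau>) \<le> d s / 2" and q: "d \<tau> \<le> 1/4"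
  shows "(\<Sum>s<Suc k * \<tau>. d s) \<le> real \<tau> * (3/2 - (1/2)^(Suc k))"
proof (induction k)
  case 0
  have "(\<Sum>s<\<tau>. d s) \<le> (\<Sum>s<\<tau>. 1)" using le1 by (intro sum_mono) auto
  then show ?case by simp
next
  case (Suc k)
  let ?blk = "{Suc k * \<tau>..<Suc k * \<tau> + \<tau>}"
  have split: "(\<Sum>s<Suc (Suc k) * \<tau>. d s) = (\<Sum>s<Suc k * \<tau>. d s) + (\<Sum>s\<in>?blk. d s)"
    by (simp add: lessThan_atLeast0 sum.atLeastLessThan_concat algebra_simps)
  have "(\<Sum>s\<in>?blk. d s) \<le> real (card ?blk) * (1/2)^(k+2)"
    using mono halving_geometric[of d \<tau>, OF half q]
    by (intro sum_bounded_above) (meson atLeastLessThan_iff order_trans)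
  then have "(\<Sum>s<Suc (Suc k) * \<tau>. d s) \<le> real \<tau> * (3/2 - (1/2)^(Suc k)) + real \<tau> * (1/2)^(k+2)"
    using split Suc by simp
  also have "\<dots> = real \<tau> * (3/2 - (1/2)^(Suc (Suc k)))" by (simp add: algebra_simps)
  finally show ?case .
qed

lemma halving_sum_bound:
  fixes d :: "nat \<Rightarrow> real"
  assumes nn: "\<And>s. 0 \<le> d s" and le1: "\<And>s. d s \<le> 1"
    and mono: "\<And>s s'. s \<le> s' \<Longrightarrow> d s' \<le> d s"
    and half: "\<And>s. d (s + \<tau>) \<le> d s / 2" and q: "d \<tau> \<le> 1/4"
  shows "(\<Sum>s<T. d s) \<le> 3/2 * real \<tau>"
proof (cases "\<tau> = 0")
  case True
  have "d s = 0" for s using half[of s] nn[of s] True by simp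
  then show ?thesis by simp
next
  case False
  then have "T \<le> Suc T * \<tau>" by (simp add: add_increasing)
  then have "(\<Sum>s<T. d s) \<le> (\<Sum>s<Suc T * \<tau>. d s)"
    using nn by (intro sum_mono2) auto
  also have "\<dots> \<le> real \<tau> * (3/2 - (1/2)^(Suc T))" by (rule halving_block_sum[OF le1 mono half q])
  also have "\<dots> \<le> 3/2 * real \<tau>" by (simp add: algebra_simps)
  finally show ?thesis .
qed

section \<open>Consequences of ergodicity\<close>

text \<open>A set of positive integers closed under addition with gcd 1 contains two consecutive
  integers: the least positive difference \<open>d\<close> of two of its elements divides every element
  (otherwise a smaller positive difference appears), hence divides the gcd.\<close>
lemma additive_set_consecutive:
  fixes S :: "nat set"
  assumes pos: "\<forall>x\<in>S. 0 < x" and add: "\<forall>x\<in>S. \<forall>y\<in>S. x + y \<in> S" and g: "Gcd S = 1"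
  shows "\<exists>a\<in>S. a + 1 \<in> S"
proof -
  have mul: "x \<in> S \<Longrightarrow> Suc k * x \<in> S" for x k
    by (induction k) (use add in auto)
  define gaps where "gaps = {d. 0 < d \<and> (\<exists>a\<in>S. a + d \<in> S)}"
  have elem_gap: "x \<in> S \<Longrightarrow> x \<in> gaps" for x
    unfolding gaps_def using pos add by auto
  obtain s where s: "s \<in> S" using g by fastforce
  define d0 where "d0 = (LEAST d. d \<in> gaps)"
  have "d0 \<in> gaps" unfolding d0_def using elem_gap[OF s] by (rule LeastI)
  then obtain a where a: "a \<in> S" "a + d0 \<in> S" and d0pos: "0 < d0" unfolding gaps_def by auto
  have "d0 dvd x" if x: "x \<in> S" for x
  proof -
    define q where "q = x div d0"
    define r where "r = x mod d0"
    have "d0 \<le> x" unfolding d0_def using elem_gap[OF x] by (rule Least_le)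
    then have "d0 div d0 \<le> x div d0" by (rule div_le_mono)
    then have q1: "q \<ge> 1" unfolding q_def using d0pos by simp
    have y1: "q * (a + d0) \<in> S" using mul[OF a(2), of "q - 1"] q1 by simp
    have y2: "x + q * a \<in> S" using mul[OF a(1), of "q - 1"] q1 add x by simp
    have "x + q * a = q * (a + d0) + r"
      unfolding q_def r_def by (simp add: algebra_simps)
    then have "r \<noteq> 0 \<Longrightarrow> r \<in> gaps" unfolding gaps_def using y1 y2 by auto
    moreover have "r \<in> gaps \<Longrightarrow> d0 \<le> r" unfolding d0_def by (rule Least_le)
    moreover have "r < d0" unfolding r_def using d0pos by simp
    ultimately have "x mod d0 = 0" unfolding r_def by linarith
    then show ?thesis by (rule mod_0_imp_dvd)
  qed
  then have "d0 dvd Gcd S" by (intro Gcd_greatest) auto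
  then have "d0 = 1" using g by simp
  then show ?thesis using a by auto
qed

text \<open>If \<open>a\<close> and \<open>a+1\<close> lie in an additively closed set, so does every \<open>n \<ge> a\<^sup>2\<close>:
  write \<open>n = (q - r) a + r (a + 1)\<close> with \<open>q = n div a\<close>, \<open>r = n mod a \<le> q\<close>.\<close>
lemma additive_set_cofinite:
  fixes S :: "nat set"
  assumes add: "\<forall>x\<in>S. \<forall>y\<in>S. x + y \<in> S" and a: "a \<in> S" "a + 1 \<in> S" and apos: "0 < a"
  shows "\<forall>n\<ge>a * a. n \<in> S"
proof (intro allI impI)
  fix n assume n: "a * a \<le> n"
  have mul0: "x \<in> S \<Longrightarrow> k * x \<in> S \<union> {0}" for x k
    by (induction k) (use add in auto)
  define q where "q = n div a"
  define r where "r = n mod a"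
  have "a \<le> q" unfolding q_def using n apos by (metis div_le_mono nonzero_mult_div_cancel_left neq0_conv)
  moreover have "r < a" unfolding r_def using apos by simp
  ultimately have "n = (q - r) * a + r * (a + 1)"
    unfolding q_def r_def by (simp add: algebra_simps diff_mult_distrib)
  moreover have "(q - r) * a + r * (a + 1) \<in> S \<union> {0}"
    using mul0[OF a(1), of "q - r"] mul0[OF a(2), of r] add by auto
  moreover have "n \<noteq> 0" using n apos by (metis le_0_eq mult_is_0 neq0_conv)
  ultimately show "n \<in> S" by auto
qed

lemma mpow_pos_add:
  assumes S: "stochastic N P" and "v < N" "w < N"
    and "0 < mpow N P s u v" and "0 < mpow N P t v w"
  shows "0 < mpow N P (s + t) u w"
proof -
  have "mpow N P s u v * mpow N P t v w \<le> (\<Sum>x<N. mpow N P s u x * mpow N P t x w)"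
    using assms by (intro member_le_sum) (auto intro!: mult_nonneg_nonneg mpow_nonneg[OF S])
  also have "\<dots> = mpow N P (s + t) u w" using mpow_add[OF assms(3)] by simp
  finally show ?thesis using assms(4,5) by (meson mult_pos_pos order_less_le_trans)
qed

text \<open>For an ergodic chain every entry of \<open>P\<^sup>n\<close> is eventually positive: aperiodicity makes
  all large return times available, irreducibility adds a fixed path.\<close>
lemma ergodic_eventually_positive:
  assumes S: "stochastic N P" and E: "ergodic N P" and u: "u < N" and v: "v < N"
  shows "eventually (\<lambda>n. 0 < mpow N P n u v) sequentially"
proof -
  let ?R = "{t. t \<ge> 1 \<and> mpow N P t v v > 0}"
  have g: "Gcd ?R = 1" using E v unfolding ergodic_def aperiodic_chain_def period_def by auto
  have closed: "\<forall>x\<in>?R. \<forall>y\<in>?R. x + y \<in> ?R"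
    using mpow_pos_add[OF S v v] by auto
  obtain a where a: "a \<in> ?R" "a + 1 \<in> ?R"
    using additive_set_consecutive[OF _ closed g] by auto
  have returns: "\<forall>n\<ge>a * a. n \<in> ?R"
    using additive_set_cofinite[OF closed a] a(1) by simp
  obtain t where t: "0 < mpow N P t u v"
    using E u v unfolding ergodic_def irreducible_chain_def by auto
  have "0 < mpow N P n u v" if "t + a * a \<le> n" for n
    using mpow_pos_add[OF S v v t, of "n - t"] returns that by auto
  then show ?thesis unfolding eventually_sequentially by blast
qed

lemma ergodic_primitive:
  assumes S: "stochastic N P" and E: "ergodic N P"
  shows "\<exists>r. \<forall>u<N. \<forall>v<N. 0 < mpow N P r u v"
proof -
  have "eventually (\<lambda>n. \<forall>p\<in>{..<N} \<times> {..<N}. 0 < mpow N P n (fst p) (snd p)) sequentially"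
    using ergodic_eventually_positive[OF S E] by (intro eventually_ball_finite) auto
  then obtain r where "\<forall>p\<in>{..<N} \<times> {..<N}. 0 < mpow N P r (fst p) (snd p)"
    unfolding eventually_sequentially by blast
  then show ?thesis by auto
qed

lemma dtv_doeblin_step:
  assumes S: "stochastic N P" and St: "stationary N P \<pi>" and v: "v < N"
    and th_le: "\<forall>u<N. \<forall>w<N. \<theta> \<le> mpow N P r u w"
  shows "dtv N (mpow N P (s + r) v) \<pi> \<le> (1 - real N * \<theta>) * dtv N (mpow N P s v) \<pi>"
proof -
  define x where "x u = mpow N P s v u - \<pi> u" for u
  have x0: "(\<Sum>u<N. x u) = 0"
    using mpow_row_sum[OF S v, of s] St unfolding x_def stationary_def by (simp add: sum_subtractf)
  have "(\<Sum>w<N. \<bar>mpow N P (s + r) v w - \<pi> w\<bar>) = (\<Sum>w<N. \<bar>\<Sum>u<N. x u * mpow N P r u w\<bar>)"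
    unfolding x_def using mpow_deviation_shift[OF St] by (intro sum.cong refl) auto
  also have "\<dots> \<le> (1 - real N * \<theta>) * (\<Sum>u<N. \<bar>x u\<bar>)"
    by (rule l1_contraction) (use mpow_row_sum[OF S] th_le x0 in auto)
  finally show ?thesis unfolding dtv_def x_def by simp
qed

text \<open>Hence \<open>P\<^sup>t(v,\<cdot>)\<close> converges to \<open>\<pi>\<close> geometrically in total variation: with \<open>\<theta>\<close> the least
  entry of a positive power \<open>P\<^sup>r\<close>, the distance after \<open>k r\<close> steps is at most \<open>(1 - N \<theta>)\<^sup>k\<close>.\<close>
lemma ergodic_dtv_small:
  assumes S: "stochastic N P" and St: "stationary N P \<pi>" and E: "ergodic N P"
    and v: "v < N" and \<epsilon>: "0 < \<epsilon>"
  shows "\<exists>t. dtv N (mpow N P t v) \<pi> \<le> \<epsilon>"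
proof -
  obtain r where r: "\<forall>u<N. \<forall>v<N. 0 < mpow N P r u v" using ergodic_primitive[OF S E] by auto
  let ?A = "(\<lambda>p. mpow N P r (fst p) (snd p)) ` ({..<N} \<times> {..<N})"
  define \<theta> where "\<theta> = Min ?A"
  have fin: "finite ?A" and ne: "?A \<noteq> {}" using v by auto
  have th_pos: "0 < \<theta>" unfolding \<theta>_def using Min_in[OF fin ne] r by auto
  have th_le: "\<forall>u<N. \<forall>w<N. \<theta> \<le> mpow N P r u w"
  proof (intro allI impI)
    fix u w assume "u < N" "w < N"
    then have "mpow N P r u w \<in> ?A" by (intro rev_image_eqI[of "(u, w)"]) auto
    then show "\<theta> \<le> mpow N P r u w" unfolding \<theta>_def using fin by simp
  qed
  define c where "c = 1 - real N * \<theta>"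
  have "(\<Sum>w<N. \<theta>) \<le> (\<Sum>w<N. mpow N P r v w)" using th_le v by (intro sum_mono) auto
  then have c0: "0 \<le> c" using mpow_row_sum[OF S v, of r] unfolding c_def by simp
  have c1: "c < 1" unfolding c_def using th_pos v by simp
  have geometric: "dtv N (mpow N P (k * r) v) \<pi> \<le> c ^ k" for k
  proof (induction k)
    case 0 then show ?case using dtv_mpow_le1[OF S St v, of 0] by simp
  next
    case (Suc k)
    have "dtv N (mpow N P (Suc k * r) v) \<pi> \<le> c * dtv N (mpow N P (k * r) v) \<pi>"
      using dtv_doeblin_step[OF S St v th_le, of "k * r"] unfolding c_def by (simp add: add.commute)
    also have "\<dots> \<le> c * c ^ k" using Suc c0 by (intro mult_left_mono) auto
    finally show ?case by simp
  qed
  obtain k where "c ^ k < \<epsilon>" using real_arch_pow_inv[OF \<epsilon> c1] by auto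
  then show ?thesis using geometric[of k] by (intro exI[of _ "k * r"]) simp
qed

lemma mixing_rate_spec:
  assumes S: "stochastic N P" and St: "stationary N P \<pi>" and E: "ergodic N P" and a: "a < N"
  shows "dtv N (mpow N P (mixing_rate N P \<pi>) a) \<pi> \<le> 1/4"
proof -
  let ?L = "LEAST t. dtv N (mpow N P t a) \<pi> \<le> 1/4"
  have "?L \<le> mixing_rate N P \<pi>"
    unfolding mixing_rate_def mixing_time_def using a by (intro Max_ge) auto
  moreover have "dtv N (mpow N P ?L a) \<pi> \<le> 1/4"
    by (rule LeastI_ex[OF ergodic_dtv_small[OF S St E a]]) simp
  ultimately show ?thesis using dtv_mpow_antimono[OF S St] by (meson order_trans)
qed

lemma stationary_positive:
  assumes S: "stochastic N P" and E: "ergodic N P" and St: "stationary N P \<pi>" and v: "v < N"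
  shows "0 < \<pi> v"
proof -
  have nn: "\<forall>u<N. 0 \<le> \<pi> u" and s1: "(\<Sum>u<N. \<pi> u) = 1" using St unfolding stationary_def by auto
  obtain u where u: "u < N" "0 < \<pi> u"
    using s1 nn by (metis (no_types, lifting) lessThan_iff order_le_less sum.neutral zero_neq_one)
  obtain t where t: "0 < mpow N P t u v" using E u v unfolding ergodic_def irreducible_chain_def by auto
  have "\<pi> u * mpow N P t u v \<le> (\<Sum>x<N. \<pi> x * mpow N P t x v)"
    using u nn v by (intro member_le_sum) (auto intro!: mult_nonneg_nonneg mpow_nonneg[OF S])
  also have "\<dots> = \<pi> v" by (rule stationary_mpow[OF St v])
  finally show ?thesis using mult_pos_pos[OF u(2) t] by linarith
qed

lemma pi_min_bounds:
  assumes S: "stochastic N P" and E: "ergodic N P" and St: "stationary N P \<pi>" and "0 < N"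
  shows "0 < pi_min N \<pi>" and "\<forall>v<N. pi_min N \<pi> \<le> \<pi> v"
proof -
  have fin: "finite (\<pi> ` {..<N})" and ne: "\<pi> ` {..<N} \<noteq> {}" using \<open>0 < N\<close> by auto
  show "0 < pi_min N \<pi>"
    unfolding pi_min_def using Min_in[OF fin ne] stationary_positive[OF S E St] by auto
  show "\<forall>v<N. pi_min N \<pi> \<le> \<pi> v" unfolding pi_min_def by (auto intro!: Min_le)
qed

theorem theorem5p10:
  fixes N :: nat and P :: "nat \<Rightarrow> nat \<Rightarrow> real" and \<pi> :: "nat \<Rightarrow> real"
    and \<delta> :: "nat \<Rightarrow> nat" and \<sigma> :: "nat \<Rightarrow> nat \<Rightarrow> nat" and \<chi>0 :: "nat \<Rightarrow> nat"
  assumes "\<forall>u<N. \<forall>v<N. P u v \<in> \<rat>"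
    and "stochastic N P"
    and "ergodic N P"
    and "stationary N P \<pi>"
    and "reversible N P \<pi>"
    and "rotor_seq_ok N P \<delta> \<sigma>"
    and "w < N"
  shows "\<bar>real (rr_chi N \<sigma> \<delta> \<chi>0 T w) - mu N P \<chi>0 T w\<bar>
           \<le> 3 * \<pi> w / pi_min N \<pi> * real (mixing_rate N P \<pi>) * real (Delta_bar N \<delta>)"
proof -
  note S = assms(2) and E = assms(3) and St = assms(4) and Rv = assms(5) and R = assms(6)
    and w = assms(7)
  let ?M = "mixing_rate N P \<pi>" and ?d = "\<lambda>s. dtv N (mpow N P s w) \<pi>"
  have m: "0 < pi_min N \<pi>" and m_le: "\<forall>v<N. pi_min N \<pi> \<le> \<pi> v"
    using pi_min_bounds[OF S E St] w by auto
  let ?C = "2 * real (Delta_bar N \<delta>) * \<pi> w / pi_min N \<pi>"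
  have sum_d: "(\<Sum>s<T. ?d s) \<le> 3/2 * real ?M"
  proof (rule halving_sum_bound)
    show "?d (s + ?M) \<le> ?d s / 2" for s
      using dtv_halving[OF S St w] mixing_rate_spec[OF S St E] by blast
  qed (use dtv_nonneg dtv_mpow_le1[OF S St w] dtv_mpow_antimono[OF S St]
           mixing_rate_spec[OF S St E w] in auto)
  have "0 \<le> ?C" using m m_le w by fastforce
  have "\<bar>real (rr_chi N \<sigma> \<delta> \<chi>0 T w) - mu N P \<chi>0 T w\<bar> \<le> ?C * (\<Sum>s<T. ?d s)"
    by (rule rr_deviation_bound[OF R S St Rv m m_le w])
  also have "\<dots> \<le> ?C * (3/2 * real ?M)"
    using sum_d \<open>0 \<le> ?C\<close> by (rule mult_left_mono)
  also have "\<dots> = 3 * \<pi> w / pi_min N \<pi> * real ?M * real (Delta_bar N \<delta>)"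
    by (simp add: field_simps)
  finally show ?thesis .
qed

end
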